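(* Let $\gamma\colon I\to\mathbb{R}^2$ be a simple, smooth, closed curve (a smooth embedding of a circle into the plane) whose signed curvature satisfies $|k(s)|<1$ for all $s\in I$. Then the closed region bounded by $\gamma$ is locally drawable and locally closed-disk drawable.
   Context: For a curve parametrized by arc length, with unit normal $n(s)$ obtained by rotating $\gamma'(s)$ by $90^\circ$ counterclockwise, the signed curvature $k(s)$ is defined by $\gamma''(s)=k(s)n(s)$. For $A\subseteq\mathbb{R}^2$ let $N(A)=\{x: |x-a|<1 \text{ for some } a\in A\}$ and $N_{\le}(A)=\{x: |x-a|\le 1 \text{ for some } a\in A\}$. Let $\mathcal{D}_1=\{N(A_1): A_1\subseteq\mathbb{R}^2\}$ and for $n\ge 2$ let $\mathcal{D}_n=\{D\cup N(A_n): D\in\mathcal{D}_{n-1}, A_n\subseteq\mathbb{R}^2\}$ if $n$ is odd and $\mathcal{D}_n=\{D\setminus N(A_n): D\in\mathcal{D}_{n-1}, A_n\subseteq\mathbb{R}^2\}$ if $n$ is even; $\mathcal{D}=\bigcup_n\mathcal{D}_n$ is the collection of drawable sets, and $\mathcal{D}_{\le}$ (closed-disk drawable sets) is defined the same way with $N_{\le}$ in place of $N$. A set $B\subseteq\mathbb{R}^2$ is locally drawable if every $x\in\mathbb{R}^2$ has a neighborhood $U$ such that there is $D\in\mathcal{D}$ with $U\cap B=U\cap D$; locally closed-disk drawable is defined analogously with $D\in\mathcal{D}_{\le}$. *)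

theory Defs
  imports "HOL-Analysis.Analysis"
begin

text \<open>The plane R^2 is modelled by the complex numbers; rotation by 90 degrees
  counterclockwise is multiplication by the imaginary unit.\<close>

definition Nbhd :: "complex set \<Rightarrow> complex set" where
  "Nbhd A = {x. \<exists>a\<in>A. dist x a < 1}"

definition Nbhd_le :: "complex set \<Rightarrow> complex set" where
  "Nbhd_le A = {x. \<exists>a\<in>A. dist x a \<le> 1}"

text \<open>The hierarchy D_n (index n >= 1; level 0 is empty and unused),
  parametrised by the neighbourhood operator.\<close>
fun draw_level :: "(complex set \<Rightarrow> complex set) \<Rightarrow> nat \<Rightarrow> complex set set" where
  "draw_level N 0 = {}"
| "draw_level N (Suc 0) = {N A | A. True}"
| "draw_level N (Suc (Suc m)) =
     (if odd (Suc (Suc m))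
      then {D \<union> N A | D A. D \<in> draw_level N (Suc m)}
      else {D - N A | D A. D \<in> draw_level N (Suc m)})"

definition drawable_sets :: "complex set set" where
  "drawable_sets = (\<Union>n. draw_level Nbhd n)"

definition closed_disk_drawable_sets :: "complex set set" where
  "closed_disk_drawable_sets = (\<Union>n. draw_level Nbhd_le n)"

definition locally_drawable :: "complex set \<Rightarrow> bool" where
  "locally_drawable B \<longleftrightarrow>
     (\<forall>x. \<exists>U. open U \<and> x \<in> U \<and> (\<exists>D\<in>drawable_sets. U \<inter> B = U \<inter> D))"

definition locally_closed_disk_drawable :: "complex set \<Rightarrow> bool" where
  "locally_closed_disk_drawable B \<longleftrightarrow>
     (\<forall>x. \<exists>U. open U \<and> x \<in> U \<and> (\<exists>D\<in>closed_disk_drawable_sets. U \<inter> B = U \<inter> D))"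

definition smooth_curve :: "(real \<Rightarrow> complex) \<Rightarrow> bool" where
  "smooth_curve \<gamma> \<longleftrightarrow>
     (\<exists>D :: nat \<Rightarrow> real \<Rightarrow> complex. D 0 = \<gamma> \<and>
        (\<forall>n t. (D n has_vector_derivative D (Suc n) t) (at t)))"

definition unit_normal :: "(real \<Rightarrow> complex) \<Rightarrow> real \<Rightarrow> complex" where
  "unit_normal \<gamma> s = \<i> * vector_derivative \<gamma> (at s)"

definition second_deriv :: "(real \<Rightarrow> complex) \<Rightarrow> real \<Rightarrow> complex" where
  "second_deriv \<gamma> s = vector_derivative (\<lambda>t. vector_derivative \<gamma> (at t)) (at s)"

end

theory Submission
  imports Defs
begin

text \<open>Near a point p of the curve C, take a small ball U. A point x of U off C has a nearest
  point \<gamma> t on C, and x - \<gamma> t is normal to C there. Since |k| < 1, the squared distance from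
  \<gamma> to a centre c on that normal at distance r slightly above 1 is convex along the arc near t,
  so the arc avoids the disk of radius r about c, which contains x. Hence every point of U off C
  lies in an open unit disk whose closure misses C inside U. Such a disk, intersected with U, is
  connected, so it misses the region C \<union> inside C as soon as it contains one point outside it.
  Therefore U \<inter> (C \<union> inside C) = U \<inter> (N {p} - N A), where A is the set of centres of unit
  disks missing the region inside U: a set of level 2 in both hierarchies.\<close>

lemma inner_has_real_derivative:
  fixes f g :: "real \<Rightarrow> 'a::real_inner"
  assumes "(f has_vector_derivative f') (at x)" "(g has_vector_derivative g') (at x)"
  shows "((\<lambda>x. f x \<bullet> g x) has_real_derivative (f x \<bullet> g' + f' \<bullet> g x)) (at x)"
proof -
  have "((\<lambda>x. f x \<bullet> g x) has_derivative (\<lambda>h. f x \<bullet> (h *\<^sub>R g') + (h *\<^sub>R f') \<bullet> g x)) (at x)"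
    using has_derivative_inner[OF assms[unfolded has_vector_derivative_def]] by simp
  then show ?thesis unfolding has_field_derivative_def
    by (rule has_derivative_eq_rhs) (auto simp: algebra_simps)
qed

lemma unit_speed_dist_le:
  fixes g :: "real \<Rightarrow> 'a::real_inner"
  assumes "\<And>t. (g has_vector_derivative g' t) (at t)" "\<And>t. norm (g' t) = 1"
  shows "dist (g a) (g b) \<le> \<bar>a - b\<bar>"
proof -
  have cont: "continuous_on S g" for S
    using assms(1) by (meson continuous_at_imp_continuous_on has_vector_derivative_continuous)
  have *: "dist (g b) (g a) \<le> b - a" if ab: "a < b" for a b
  proof -
    obtain x where "norm (g b - g a) \<le> norm ((b - a) *\<^sub>R g' x)"
      using mvt_general[OF ab cont, of "\<lambda>x h. h *\<^sub>R g' x"] assms(1)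
      unfolding has_vector_derivative_def by blast
    then show ?thesis using ab assms(2) by (simp add: dist_norm)
  qed
  show ?thesis
  proof (cases a b rule: linorder_cases)
    case less
    then show ?thesis using *[of a b] by (simp add: dist_commute)
  next
    case greater
    then show ?thesis using *[of b a] by simp
  qed simp
qed

lemma unit_speed_acceleration_orthogonal:
  fixes g' :: "real \<Rightarrow> 'a::real_inner"
  assumes "(g' has_vector_derivative g'') (at s)" "\<And>t. norm (g' t) = 1"
  shows "g'' \<bullet> g' s = 0"
proof -
  have "(\<lambda>t. g' t \<bullet> g' t) = (\<lambda>t. 1)"
    using assms(2) by (auto simp: power2_norm_eq_inner[symmetric])
  then have "((\<lambda>t. 1) has_real_derivative (g' s \<bullet> g'' + g'' \<bullet> g' s)) (at s)"
    using inner_has_real_derivative[OF assms(1) assms(1)] by simp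
  then have "g' s \<bullet> g'' + g'' \<bullet> g' s = 0"
    using DERIV_const DERIV_unique by blast
  then show ?thesis by (simp add: inner_commute)
qed

lemma closest_point_orthogonal_to_tangent:
  fixes g :: "real \<Rightarrow> 'a::real_inner"
  assumes "(g has_vector_derivative g') (at t)" "\<And>u. dist x (g t) \<le> dist x (g u)"
  shows "(g t - x) \<bullet> g' = 0"
proof -
  define f where "f v = (g v - x) \<bullet> (g v - x)" for v
  have dx: "((\<lambda>v. g v - x) has_vector_derivative g') (at t)"
    using has_vector_derivative_diff[OF assms(1) has_vector_derivative_const[of x]] by simp
  have "(f has_real_derivative ((g t - x) \<bullet> g' + g' \<bullet> (g t - x))) (at t)"
    unfolding f_def by (rule inner_has_real_derivative[OF dx dx])
  moreover have "f t \<le> f u" for u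
    using assms(2)[of u] unfolding f_def power2_norm_eq_inner[symmetric]
    by (simp add: dist_norm norm_minus_commute power_mono)
  ultimately have "(g t - x) \<bullet> g' + g' \<bullet> (g t - x) = 0"
    by (intro DERIV_local_min[OF _ zero_less_one]) auto
  then show ?thesis by (simp add: inner_commute)
qed

lemma critical_point_le_of_second_derivative_nonneg:
  fixes f :: "real \<Rightarrow> real"
  assumes f': "\<And>v. (f has_real_derivative f' v) (at v)"
    and f'': "\<And>v. (f' has_real_derivative f'' v) (at v)"
    and critical: "f' t = 0" and convex: "\<And>v. v \<in> {min t u..max t u} \<Longrightarrow> 0 \<le> f'' v"
  shows "f t \<le> f u"
proof (cases "u = t")
  case False
  define diff where "diff m = (if m = 0 then f else if m = 1 then f' else f'')" for m :: nat
  have "\<forall>m v. m < 2 \<and> min t u \<le> v \<and> v \<le> max t u \<longrightarrow>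
      (diff m has_real_derivative diff (Suc m) v) (at v)"
    using f' f'' unfolding diff_def by (auto simp: less_2_cases_iff)
  then have "\<exists>\<xi>. (if u < t then u < \<xi> \<and> \<xi> < t else t < \<xi> \<and> \<xi> < u) \<and>
      f u = (\<Sum>m<2. diff m t / fact m * (u - t) ^ m) + diff 2 \<xi> / fact 2 * (u - t) ^ 2"
    by (intro Taylor) (use False in \<open>auto simp: diff_def\<close>)
  then obtain \<xi> where between: "if u < t then u < \<xi> \<and> \<xi> < t else t < \<xi> \<and> \<xi> < u"
    and "f u = (\<Sum>m<2. diff m t / fact m * (u - t) ^ m) + diff 2 \<xi> / fact 2 * (u - t) ^ 2"
    by blast
  then have "f u = f t + f' t * (u - t) + f'' \<xi> / 2 * (u - t)\<^sup>2"
    by (simp add: diff_def numeral_2_eq_2)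
  moreover have "0 \<le> f'' \<xi>" using between by (intro convex) (auto split: if_splits)
  ultimately show ?thesis using critical by simp
qed simp

lemma unit_speed_curve_avoids_tangent_ball:
  fixes g :: "real \<Rightarrow> 'a::real_inner"
  assumes g': "\<And>v. (g has_vector_derivative g' v) (at v)"
    and g'': "\<And>v. (g' has_vector_derivative g'' v) (at v)"
    and unit: "\<And>v. norm (g' v) = 1"
    and tangent: "(g t - c) \<bullet> g' t = 0" and radius: "norm (g t - c) = r"
    and curvature: "\<And>v. v \<in> {min t u..max t u} \<Longrightarrow> norm (g'' v) * (r + \<bar>v - t\<bar>) \<le> 1"
  shows "r \<le> norm (g u - c)"
proof -
  define f where "f v = (g v - c) \<bullet> (g v - c)" for v
  define f' where "f' v = 2 * ((g v - c) \<bullet> g' v)" for v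
  define f'' where "f'' v = 2 * ((g v - c) \<bullet> g'' v + 1)" for v
  have dg: "((\<lambda>v. g v - c) has_vector_derivative g' v) (at v)" for v
    using has_vector_derivative_diff[OF g' has_vector_derivative_const] by simp
  have "(f has_real_derivative f' v) (at v)" for v
    using inner_has_real_derivative[OF dg dg, of v] unfolding f_def f'_def
    by (simp add: inner_commute)
  moreover have "(f' has_real_derivative f'' v) (at v)" for v
    using DERIV_cmult[OF inner_has_real_derivative[OF dg g''], of 2 v] unit[of v]
    unfolding f'_def f''_def by (simp add: power2_norm_eq_inner[symmetric])
  moreover have "f' t = 0" unfolding f'_def using tangent by simp
  moreover have "0 \<le> f'' v" if v: "v \<in> {min t u..max t u}" for v
  proof -
    have "norm (g v - c) \<le> r + \<bar>v - t\<bar>"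
      using norm_triangle_ineq[of "g v - g t" "g t - c"] unit_speed_dist_le[OF g' unit, of v t]
        radius by (simp add: dist_norm)
    then have "\<bar>(g v - c) \<bullet> g'' v\<bar> \<le> (r + \<bar>v - t\<bar>) * norm (g'' v)"
      using Cauchy_Schwarz_ineq2[of "g v - c" "g'' v"] mult_right_mono[OF _ norm_ge_zero]
      by (meson order_trans)
    also have "\<dots> \<le> 1" using curvature[OF v] by (simp add: mult.commute)
    finally show ?thesis unfolding f''_def using abs_le_D2 by fastforce
  qed
  ultimately have "f t \<le> f u" by (rule critical_point_le_of_second_derivative_nonneg)
  then have "r\<^sup>2 \<le> (norm (g u - c))\<^sup>2"
    using radius unfolding f_def power2_norm_eq_inner[symmetric] by simp
  then show ?thesis using radius by (meson norm_ge_zero power2_le_imp_le)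
qed

definition unit_disk_accessible :: "'a::metric_space set \<Rightarrow> 'a set \<Rightarrow> bool" where
  "unit_disk_accessible C U \<longleftrightarrow> (\<forall>x\<in>U - C. \<exists>c. dist x c < 1 \<and> cball c 1 \<inter> U \<inter> C = {})"

lemma connected_subset_outside:
  assumes "connected T" "T \<inter> C = {}" "x \<in> T" "x \<in> outside C"
  shows "T \<subseteq> outside C"
proof
  fix y assume "y \<in> T"
  then have "connected_component (- C) x y"
    unfolding connected_component_def using assms by blast
  then show "y \<in> outside C" using assms(4) by (rule outside_same_component)
qed

lemma region_eq_difference_of_disk_unions:
  fixes C U :: "'a::real_normed_vector set" and disk :: "'a \<Rightarrow> 'a set"
  assumes "\<And>c. convex (disk c)" "convex U" "U \<subseteq> disk p"
    and covered: "\<And>x. x \<in> U - C \<Longrightarrow> \<exists>c. x \<in> disk c \<and> disk c \<inter> U \<inter> C = {}"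
  shows "U \<inter> (C \<union> inside C)
    = U \<inter> (disk p - (\<Union>c\<in>{c. disk c \<inter> U \<inter> (C \<union> inside C) = {}}. disk c))"
proof (intro equalityI subsetI)
  fix x assume "x \<in> U \<inter> (C \<union> inside C)"
  then show "x \<in> U \<inter> (disk p - (\<Union>c\<in>{c. disk c \<inter> U \<inter> (C \<union> inside C) = {}}. disk c))"
    using assms(3) by blast
next
  fix x assume x: "x \<in> U \<inter> (disk p - (\<Union>c\<in>{c. disk c \<inter> U \<inter> (C \<union> inside C) = {}}. disk c))"
  show "x \<in> U \<inter> (C \<union> inside C)"
  proof (rule ccontr)
    assume "x \<notin> U \<inter> (C \<union> inside C)"
    then have out: "x \<in> outside C" using x union_with_inside[of C] by blast
    then obtain c where c: "x \<in> disk c" "disk c \<inter> U \<inter> C = {}"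
      using covered[of x] x outside_inside[of C] by blast
    have "disk c \<inter> U \<subseteq> outside C"
      using connected_subset_outside[OF _ c(2) _ out] c(1) x assms(1,2)
      by (simp add: convex_Int convex_connected)
    then have "disk c \<inter> U \<inter> (C \<union> inside C) = {}" by (auto simp: union_with_inside)
    then show False using x c(1) by blast
  qed
qed

lemma diff_in_draw_level_2: "N A - N A' \<in> draw_level N 2"
  by (auto simp: numeral_2_eq_2)

lemma Nbhd_eq_UN_ball: "Nbhd A = (\<Union>a\<in>A. ball a 1)"
  by (auto simp: Nbhd_def dist_commute)

lemma Nbhd_le_eq_UN_cball: "Nbhd_le A = (\<Union>a\<in>A. cball a 1)"
  by (auto simp: Nbhd_le_def dist_commute)

lemma unit_disk_accessible_ball_drawable:
  assumes "\<epsilon> \<le> 1" and acc: "unit_disk_accessible C (ball p \<epsilon>)"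
  shows "\<exists>D\<in>drawable_sets. ball p \<epsilon> \<inter> (C \<union> inside C) = ball p \<epsilon> \<inter> D"
    and "\<exists>D\<in>closed_disk_drawable_sets. ball p \<epsilon> \<inter> (C \<union> inside C) = ball p \<epsilon> \<inter> D"
proof -
  have covered_cball: "\<exists>c. x \<in> cball c 1 \<and> cball c 1 \<inter> ball p \<epsilon> \<inter> C = {}"
    and covered_ball: "\<exists>c. x \<in> ball c 1 \<and> ball c 1 \<inter> ball p \<epsilon> \<inter> C = {}"
    if "x \<in> ball p \<epsilon> - C" for x
  proof -
    have "\<exists>c. dist x c < 1 \<and> cball c 1 \<inter> ball p \<epsilon> \<inter> C = {}"
      using acc that unfolding unit_disk_accessible_def by (rule bspec)
    then obtain c where "dist x c < 1" "cball c 1 \<inter> ball p \<epsilon> \<inter> C = {}"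
      by blast
    moreover have "ball c 1 \<inter> ball p \<epsilon> \<inter> C \<subseteq> cball c 1 \<inter> ball p \<epsilon> \<inter> C"
      by auto
    ultimately show "\<exists>c. x \<in> cball c 1 \<and> cball c 1 \<inter> ball p \<epsilon> \<inter> C = {}"
      and "\<exists>c. x \<in> ball c 1 \<and> ball c 1 \<inter> ball p \<epsilon> \<inter> C = {}"
      by (auto simp: dist_commute intro!: exI[of _ c])
  qed
  have "ball p \<epsilon> \<subseteq> ball p 1" "ball p \<epsilon> \<subseteq> cball p 1"
    using \<open>\<epsilon> \<le> 1\<close> by auto
  then have open_eq: "ball p \<epsilon> \<inter> (C \<union> inside C) = ball p \<epsilon> \<inter>
      (Nbhd {p} - Nbhd {c. ball c 1 \<inter> ball p \<epsilon> \<inter> (C \<union> inside C) = {}})"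
    and closed_eq: "ball p \<epsilon> \<inter> (C \<union> inside C) = ball p \<epsilon> \<inter>
      (Nbhd_le {p} - Nbhd_le {c. cball c 1 \<inter> ball p \<epsilon> \<inter> (C \<union> inside C) = {}})"
    using region_eq_difference_of_disk_unions[where disk = "\<lambda>c. ball c 1", OF convex_ball
        convex_ball _ covered_ball]
      region_eq_difference_of_disk_unions[where disk = "\<lambda>c. cball c 1", OF convex_cball
        convex_ball _ covered_cball]
    by (simp_all add: Nbhd_eq_UN_ball Nbhd_le_eq_UN_cball)
  have "Nbhd A - Nbhd A' \<in> drawable_sets" for A A'
    unfolding drawable_sets_def using diff_in_draw_level_2 by blast
  then show "\<exists>D\<in>drawable_sets. ball p \<epsilon> \<inter> (C \<union> inside C) = ball p \<epsilon> \<inter> D"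
    by (metis open_eq)
  have "Nbhd_le A - Nbhd_le A' \<in> closed_disk_drawable_sets" for A A'
    unfolding closed_disk_drawable_sets_def using diff_in_draw_level_2 by blast
  then show "\<exists>D\<in>closed_disk_drawable_sets. ball p \<epsilon> \<inter> (C \<union> inside C) = ball p \<epsilon> \<inter> D"
    by (metis closed_eq)
qed

lemma unit_disk_accessible_imp_locally_drawable:
  assumes "\<And>p. \<exists>\<epsilon>>0. \<epsilon> \<le> 1 \<and> unit_disk_accessible C (ball p \<epsilon>)"
  shows "locally_drawable (C \<union> inside C) \<and> locally_closed_disk_drawable (C \<union> inside C)"
proof -
  have "\<exists>U. open U \<and> p \<in> U \<and> (\<exists>D\<in>drawable_sets. U \<inter> (C \<union> inside C) = U \<inter> D)
     \<and> (\<exists>D\<in>closed_disk_drawable_sets. U \<inter> (C \<union> inside C) = U \<inter> D)" for p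
  proof -
    obtain \<epsilon> where "\<epsilon> > 0" "\<epsilon> \<le> 1" and "unit_disk_accessible C (ball p \<epsilon>)"
      using assms[of p] by auto
    then show ?thesis
      using unit_disk_accessible_ball_drawable by (intro exI[of _ "ball p \<epsilon>"]) auto
  qed
  then show ?thesis
    unfolding locally_drawable_def locally_closed_disk_drawable_def by meson
qed

lemma exists_int_shift_into_period:
  fixes L :: real
  assumes "0 < L"
  shows "\<exists>m::int. a \<le> u + of_int m * L \<and> u + of_int m * L < a + L"
proof
  define m where "m = \<lceil>(a - u) / L\<rceil>"
  have "(a - u) / L \<le> m" "m < (a - u) / L + 1" unfolding m_def by linarith+
  then show "a \<le> u + of_int m * L \<and> u + of_int m * L < a + L"
    using assms by (simp add: field_simps)
qed

locale simple_closed_curve =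
  fixes \<gamma> :: "real \<Rightarrow> 'a::metric_space" and L :: real
  assumes period_pos: "0 < L" and periodic: "\<And>s. \<gamma> (s + L) = \<gamma> s"
    and inj: "inj_on \<gamma> {0..<L}" and continuous_curve: "continuous_on UNIV \<gamma>"
begin

lemma periodic_int: "\<gamma> (s + of_int m * L) = \<gamma> s"
proof -
  have nat: "\<gamma> (s + real n * L) = \<gamma> s" for s n
  proof (induction n arbitrary: s)
    case (Suc n)
    have "\<gamma> (s + real (Suc n) * L) = \<gamma> ((s + real n * L) + L)" by (simp add: algebra_simps)
    then show ?case using Suc periodic by simp
  qed simp
  show ?thesis
  proof (cases "m \<ge> 0")
    case True
    then show ?thesis using nat[of s "nat m"] by simp
  next
    case False
    then show ?thesis using nat[of "s + of_int m * L" "nat (- m)"] by simp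
  qed
qed

lemma eq_iff_parameters_congruent: "\<gamma> a = \<gamma> b \<longleftrightarrow> (\<exists>m::int. a = b + of_int m * L)"
proof
  assume eq: "\<gamma> a = \<gamma> b"
  obtain i :: int where i: "a + of_int i * L \<in> {0..<L}"
    using exists_int_shift_into_period[OF period_pos, of 0 a] by auto
  obtain j :: int where j: "b + of_int j * L \<in> {0..<L}"
    using exists_int_shift_into_period[OF period_pos, of 0 b] by auto
  have "\<gamma> (a + of_int i * L) = \<gamma> (b + of_int j * L)" using eq by (simp add: periodic_int)
  then have "a + of_int i * L = b + of_int j * L" using inj i j by (auto simp: inj_on_def)
  then show "\<exists>m::int. a = b + of_int m * L" by (intro exI[of _ "j - i"]) (simp add: algebra_simps)
qed (auto simp: periodic_int)

lemma image_period_eq_range: "\<gamma> ` {0..L} = range \<gamma>"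
proof -
  have "\<gamma> u \<in> \<gamma> ` {0..L}" for u
    using exists_int_shift_into_period[OF period_pos, of 0 u] periodic_int[of u]
    by (metis atLeastAtMost_iff add_0 image_eqI less_eq_real_def)
  then show ?thesis by auto
qed

lemma compact_range: "compact (range \<gamma>)"
  unfolding image_period_eq_range[symmetric]
  by (rule compact_continuous_image[OF continuous_on_subset[OF continuous_curve] compact_Icc]) simp

lemma eq_within_half_period_imp_eq:
  assumes "\<gamma> v = \<gamma> s" "\<bar>v - s\<bar> \<le> L / 2"
  shows "v = s"
proof -
  have "\<exists>m::int. v = s + of_int m * L"
    using assms(1) by (simp only: eq_iff_parameters_congruent)
  then obtain m :: int where m: "v = s + of_int m * L" ..
  then have "\<bar>real_of_int m\<bar> * L < 1 * L"
    using assms(2) period_pos by (simp add: abs_mult)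
  then have "\<bar>real_of_int m\<bar> < 1" using period_pos mult_right_less_imp_less by fastforce
  then have "m = 0" by linarith
  then show ?thesis using m by simp
qed

lemma near_points_have_near_parameters:
  assumes "0 < \<eta>"
  shows "\<exists>\<epsilon>>0. \<forall>u. dist (\<gamma> u) (\<gamma> s0) < \<epsilon> \<longrightarrow> (\<exists>v. \<gamma> v = \<gamma> u \<and> \<bar>v - s0\<bar> < \<eta>)"
proof -
  define \<eta>' where "\<eta>' = min \<eta> (L / 2)"
  have \<eta>': "0 < \<eta>'" "\<eta>' \<le> \<eta>" "\<eta>' \<le> L / 2" using assms period_pos by (auto simp: \<eta>'_def)
  define K where "K = cball s0 (L / 2) - ball s0 \<eta>'"
  have "compact K" unfolding K_def by (intro compact_diff compact_cball open_ball)
  moreover have "s0 + L / 2 \<in> K" using \<eta>' by (simp add: K_def dist_real_def)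
  then have "K \<noteq> {}" by blast
  moreover have "continuous_on K (\<lambda>v. dist (\<gamma> v) (\<gamma> s0))"
    by (intro continuous_intros continuous_on_subset[OF continuous_curve]) simp
  ultimately obtain v0 where v0: "v0 \<in> K"
    and min: "\<And>v. v \<in> K \<Longrightarrow> dist (\<gamma> v0) (\<gamma> s0) \<le> dist (\<gamma> v) (\<gamma> s0)"
    using continuous_attains_inf[of K "\<lambda>v. dist (\<gamma> v) (\<gamma> s0)"] by auto
  have "\<gamma> v0 \<noteq> \<gamma> s0"
  proof
    assume "\<gamma> v0 = \<gamma> s0"
    moreover have "\<bar>v0 - s0\<bar> \<le> L / 2" using v0 by (simp add: K_def dist_real_def abs_minus_commute)
    ultimately have "v0 = s0" by (rule eq_within_half_period_imp_eq)
    then show False using v0 \<eta>' by (simp add: K_def)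
  qed
  show ?thesis
  proof (rule exI[of _ "dist (\<gamma> v0) (\<gamma> s0)"], intro conjI allI impI)
    show "0 < dist (\<gamma> v0) (\<gamma> s0)" using \<open>\<gamma> v0 \<noteq> \<gamma> s0\<close> by simp
  next
    fix u assume near: "dist (\<gamma> u) (\<gamma> s0) < dist (\<gamma> v0) (\<gamma> s0)"
    obtain m :: int where "s0 - L / 2 \<le> u + of_int m * L" "u + of_int m * L < s0 - L / 2 + L"
      using exists_int_shift_into_period[OF period_pos, of "s0 - L / 2" u] by auto
    then have "dist s0 (u + of_int m * L) \<le> L / 2" unfolding dist_real_def abs_le_iff by linarith
    moreover have "u + of_int m * L \<notin> K"
      using min[of "u + of_int m * L"] near by (auto simp: periodic_int)
    ultimately have "dist s0 (u + of_int m * L) < \<eta>'" by (simp add: K_def)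
    then show "\<exists>v. \<gamma> v = \<gamma> u \<and> \<bar>v - s0\<bar> < \<eta>"
      using \<eta>' periodic_int
      by (intro exI[of _ "u + of_int m * L"]) (auto simp: dist_real_def abs_minus_commute)
  qed
qed

end

locale low_curvature_closed_curve = simple_closed_curve \<gamma> L
  for \<gamma> :: "real \<Rightarrow> 'a::euclidean_space" and L +
  fixes \<gamma>' \<gamma>'' :: "real \<Rightarrow> 'a"
  assumes has_derivative: "\<And>t. (\<gamma> has_vector_derivative \<gamma>' t) (at t)"
    and has_second_derivative: "\<And>t. (\<gamma>' has_vector_derivative \<gamma>'' t) (at t)"
    and unit_speed: "\<And>t. norm (\<gamma>' t) = 1"
    and curvature_lt_1: "\<And>t. norm (\<gamma>'' t) < 1"
    and continuous_second_derivative: "continuous_on UNIV \<gamma>''"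
begin

text \<open>The factor 1 + 3 \<eta> dominates r + |v - t| in the tangent-disk estimate below: there the
  radius is r \<le> 1 + \<eta>/2 and the parameters t, v lie within 2 \<eta> of each other.\<close>
lemma curvature_margin: "\<exists>\<eta>>0. \<eta> \<le> 1 \<and> (\<forall>v. \<bar>v - s0\<bar> \<le> \<eta> \<longrightarrow> norm (\<gamma>'' v) * (1 + 3 * \<eta>) \<le> 1)"
proof -
  define \<kappa> where "\<kappa> = (norm (\<gamma>'' s0) + 1) / 2"
  have \<kappa>: "norm (\<gamma>'' s0) < \<kappa>" "\<kappa> < 1" "0 < \<kappa>"
    using curvature_lt_1[of s0] unfolding \<kappa>_def by (auto simp: add_nonneg_pos)
  have "continuous (at s0) \<gamma>''"
    using continuous_second_derivative by (simp add: continuous_on_eq_continuous_at)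
  then obtain \<delta> where "\<delta> > 0" and \<delta>: "\<And>v. dist v s0 < \<delta> \<Longrightarrow> dist (\<gamma>'' v) (\<gamma>'' s0) < \<kappa> - norm (\<gamma>'' s0)"
    using \<kappa>(1) unfolding continuous_at_eps_delta by (meson diff_gt_0_iff_gt)
  define \<eta> where "\<eta> = min (\<delta> / 2) ((1 - \<kappa>) / 3)"
  have \<eta>: "0 < \<eta>" "\<eta> \<le> 1" "1 + 3 * \<eta> \<le> 2 - \<kappa>"
    using \<open>\<delta> > 0\<close> \<kappa> by (auto simp: \<eta>_def min_def)
  have "norm (\<gamma>'' v) * (1 + 3 * \<eta>) \<le> 1" if "\<bar>v - s0\<bar> \<le> \<eta>" for v
  proof -
    have "dist (\<gamma>'' v) (\<gamma>'' s0) < \<kappa> - norm (\<gamma>'' s0)"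
      using that \<eta> by (intro \<delta>) (simp add: \<eta>_def dist_real_def)
    then have "norm (\<gamma>'' v) \<le> \<kappa>"
      using norm_triangle_ineq2[of "\<gamma>'' v" "\<gamma>'' s0"] by (simp add: dist_norm)
    then have "norm (\<gamma>'' v) * (1 + 3 * \<eta>) \<le> \<kappa> * (2 - \<kappa>)"
      using \<eta> \<kappa> by (intro mult_mono) auto
    also have "\<dots> \<le> 1"
      using zero_le_power2[of "1 - \<kappa>"] by (simp add: power2_eq_square algebra_simps)
    finally show ?thesis .
  qed
  then show ?thesis using \<eta> by blast
qed

lemma unit_disk_at_nearest_point:
  assumes margin: "\<forall>v. \<bar>v - s0\<bar> \<le> \<eta> \<longrightarrow> norm (\<gamma>'' v) * (1 + 3 * \<eta>) \<le> 1" and "\<eta> \<le> 1"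
    and x: "x \<notin> range \<gamma>" and nearest: "\<And>u. dist x (\<gamma> t) \<le> dist x (\<gamma> u)"
    and t: "\<bar>t - s0\<bar> < \<eta>" and close: "dist x (\<gamma> t) < \<eta>"
  shows "\<exists>c. dist x c < 1 \<and> (\<forall>u. \<bar>u - s0\<bar> < \<eta> \<longrightarrow> 1 < dist (\<gamma> u) c)"
proof -
  define d where "d = dist x (\<gamma> t)"
  have d: "0 < d" "d < \<eta>" using x close by (auto simp: d_def)
  \<comment> \<open>A radius r > 1 with r - d < 1: the disk about c avoids the arc and still reaches x.\<close>
  define r where "r = 1 + d / 2"
  define c where "c = \<gamma> t + (r / d) *\<^sub>R (x - \<gamma> t)"
  have "(\<gamma> t - x) \<bullet> \<gamma>' t = 0"
    by (rule closest_point_orthogonal_to_tangent[OF has_derivative nearest])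
  then have tangent: "(\<gamma> t - c) \<bullet> \<gamma>' t = 0"
    by (simp add: c_def algebra_simps)
  have radius: "norm (\<gamma> t - c) = r"
    using d by (simp add: c_def r_def d_def dist_norm norm_minus_commute)
  have "x - c = (1 - r / d) *\<^sub>R (x - \<gamma> t)" by (simp add: c_def algebra_simps)
  then have "dist x c = \<bar>1 - r / d\<bar> * d" by (simp add: dist_norm d_def)
  also have "\<dots> = \<bar>d - r\<bar>" using d by (simp add: abs_mult[symmetric] field_simps)
  also have "\<dots> < 1" using d \<open>\<eta> \<le> 1\<close> by (simp add: r_def)
  finally have "dist x c < 1" .
  moreover have "1 < dist (\<gamma> u) c" if u: "\<bar>u - s0\<bar> < \<eta>" for u
  proof -
    have "norm (\<gamma>'' v) * (r + \<bar>v - t\<bar>) \<le> 1" if v: "v \<in> {min t u..max t u}" for v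
    proof -
      have "\<bar>v - s0\<bar> \<le> \<eta>" "r + \<bar>v - t\<bar> \<le> 1 + 3 * \<eta>" using v t u d by (auto simp: r_def)
      then show ?thesis
        using margin mult_left_mono[OF _ norm_ge_zero] by (meson order_trans)
    qed
    then have "r \<le> norm (\<gamma> u - c)"
      by (rule unit_speed_curve_avoids_tangent_ball[OF has_derivative has_second_derivative
            unit_speed tangent radius])
    then show ?thesis using d by (simp add: r_def dist_norm)
  qed
  ultimately show ?thesis by blast
qed

lemma unit_disk_accessible_near_curve:
  "\<exists>\<epsilon>>0. \<epsilon> \<le> 1 \<and> unit_disk_accessible (range \<gamma>) (ball (\<gamma> s0) \<epsilon>)"
proof -
  obtain \<eta> where "0 < \<eta>" "\<eta> \<le> 1"
    and margin: "\<forall>v. \<bar>v - s0\<bar> \<le> \<eta> \<longrightarrow> norm (\<gamma>'' v) * (1 + 3 * \<eta>) \<le> 1"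
    using curvature_margin by blast
  obtain \<epsilon>' where "0 < \<epsilon>'"
    and near: "\<And>u. dist (\<gamma> u) (\<gamma> s0) < \<epsilon>' \<Longrightarrow> \<exists>v. \<gamma> v = \<gamma> u \<and> \<bar>v - s0\<bar> < \<eta>"
    using near_points_have_near_parameters[OF \<open>0 < \<eta>\<close>] by blast
  define \<epsilon> where "\<epsilon> = min (\<epsilon>' / 2) \<eta>"
  have \<epsilon>: "0 < \<epsilon>" "\<epsilon> \<le> 1" "\<epsilon> \<le> \<eta>" "2 * \<epsilon> \<le> \<epsilon>'"
    using \<open>0 < \<epsilon>'\<close> \<open>0 < \<eta>\<close> \<open>\<eta> \<le> 1\<close> by (auto simp: \<epsilon>_def)
  have "\<exists>c. dist x c < 1 \<and> cball c 1 \<inter> ball (\<gamma> s0) \<epsilon> \<inter> range \<gamma> = {}"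
    if x: "x \<in> ball (\<gamma> s0) \<epsilon> - range \<gamma>" for x
  proof -
    have "closed (range \<gamma>)" by (rule compact_imp_closed[OF compact_range])
    then obtain y where "y \<in> range \<gamma>" and y_nearest: "\<And>z. z \<in> range \<gamma> \<Longrightarrow> dist x y \<le> dist x z"
      using distance_attains_inf[of "range \<gamma>" x] by blast
    have "dist x y < \<epsilon>" using y_nearest[of "\<gamma> s0"] x by (auto simp: dist_commute)
    then have "dist y (\<gamma> s0) < \<epsilon>'"
      using x \<epsilon> dist_triangle3[of y "\<gamma> s0" x] by (simp add: dist_commute)
    then obtain t where t: "\<gamma> t = y" "\<bar>t - s0\<bar> < \<eta>"
      using near \<open>y \<in> range \<gamma>\<close> by blast
    obtain c where "dist x c < 1" and far: "\<And>u. \<bar>u - s0\<bar> < \<eta> \<Longrightarrow> 1 < dist (\<gamma> u) c"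
      using unit_disk_at_nearest_point[OF margin \<open>\<eta> \<le> 1\<close>, of x t] x t y_nearest
        \<open>dist x y < \<epsilon>\<close> \<epsilon> by auto
    have "\<gamma> u \<notin> cball c 1" if "\<gamma> u \<in> ball (\<gamma> s0) \<epsilon>" for u
    proof -
      have "dist (\<gamma> u) (\<gamma> s0) < \<epsilon>'" using that \<epsilon> by (simp add: dist_commute)
      then obtain v where "\<gamma> v = \<gamma> u" "\<bar>v - s0\<bar> < \<eta>" using near by blast
      then show ?thesis using far[of v] by (simp add: dist_commute)
    qed
    then show ?thesis using \<open>dist x c < 1\<close> by blast
  qed
  then show ?thesis using \<epsilon> unfolding unit_disk_accessible_def by blast
qed

lemma unit_disk_accessible_everywhere:
  "\<exists>\<epsilon>>0. \<epsilon> \<le> 1 \<and> unit_disk_accessible (range \<gamma>) (ball p \<epsilon>)"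
proof (cases "p \<in> range \<gamma>")
  case True
  then show ?thesis using unit_disk_accessible_near_curve by auto
next
  case False
  have "open (- range \<gamma>)" using compact_range by (simp add: compact_imp_closed open_Compl)
  then obtain e where "0 < e" "ball p e \<subseteq> - range \<gamma>"
    using False open_contains_ball by blast
  then have "unit_disk_accessible (range \<gamma>) (ball p (min e 1))"
    unfolding unit_disk_accessible_def by (intro ballI exI[of _ p]) (auto simp: dist_commute)
  then show ?thesis using \<open>0 < e\<close> by (intro exI[of _ "min e 1"]) auto
qed

end

lemma smooth_curve_second_derivative:
  assumes "smooth_curve \<gamma>"
  obtains \<gamma>' \<gamma>'' where "\<And>t. (\<gamma> has_vector_derivative \<gamma>' t) (at t)"
    "\<And>t. (\<gamma>' has_vector_derivative \<gamma>'' t) (at t)" "continuous_on UNIV \<gamma>''"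
proof -
  obtain D :: "nat \<Rightarrow> real \<Rightarrow> complex" where "D 0 = \<gamma>"
    and D: "\<And>n t. (D n has_vector_derivative D (Suc n) t) (at t)"
    using assms unfolding smooth_curve_def by blast
  have "continuous_on UNIV (D 2)"
    using D[of 2] by (meson continuous_at_imp_continuous_on has_vector_derivative_continuous)
  then show ?thesis
    using that[of "D 1" "D 2"] D[of 0] D[of 1] \<open>D 0 = \<gamma>\<close> by (simp add: numeral_2_eq_2)
qed

lemma second_deriv_eq_curvature_normal:
  fixes \<gamma> :: "real \<Rightarrow> complex" and s :: real
  assumes \<gamma>': "\<And>t. (\<gamma> has_vector_derivative \<gamma>' t) (at t)"
    and \<gamma>'': "\<And>t. (\<gamma>' has_vector_derivative \<gamma>'' t) (at t)"
    and unit: "\<And>t. norm (\<gamma>' t) = 1"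
  defines "k \<equiv> Im (\<gamma>'' s * cnj (\<gamma>' s))"
  shows "second_deriv \<gamma> s = complex_of_real k * unit_normal \<gamma> s" and "norm (\<gamma>'' s) = \<bar>k\<bar>"
proof -
  have vd: "vector_derivative \<gamma> (at t) = \<gamma>' t" for t
    using \<gamma>' by (rule vector_derivative_at)
  have "\<gamma>'' s \<bullet> \<gamma>' s = 0" by (rule unit_speed_acceleration_orthogonal[OF \<gamma>'' unit])
  then have "Re (\<gamma>'' s * cnj (\<gamma>' s)) = 0" by (simp add: inner_complex_def)
  then have w: "\<gamma>'' s * cnj (\<gamma>' s) = complex_of_real k * \<i>" by (simp add: k_def complex_eq_iff)
  have "\<gamma>' s * cnj (\<gamma>' s) = 1" using complex_norm_square[of "\<gamma>' s"] unit[of s] by simp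
  then have acc: "\<gamma>'' s = complex_of_real k * \<i> * \<gamma>' s"
    by (metis w mult.assoc mult.commute mult_1_right)
  have "second_deriv \<gamma> s = \<gamma>'' s"
    unfolding second_deriv_def vd by (rule vector_derivative_at[OF \<gamma>''])
  then show "second_deriv \<gamma> s = complex_of_real k * unit_normal \<gamma> s"
    by (simp add: acc unit_normal_def vd mult.assoc)
  show "norm (\<gamma>'' s) = \<bar>k\<bar>" by (simp add: acc norm_mult unit)
qed

theorem theorem4p2:
  fixes \<gamma> :: "real \<Rightarrow> complex" and L :: real
  assumes "L > 0"
    and "smooth_curve \<gamma>"
    and "\<And>s. \<gamma> (s + L) = \<gamma> s"
    and "inj_on \<gamma> {0..<L}"
    and "\<And>s. norm (vector_derivative \<gamma> (at s)) = 1"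
    and "\<And>s k. second_deriv \<gamma> s = complex_of_real k * unit_normal \<gamma> s \<Longrightarrow> \<bar>k\<bar> < 1"
  shows "locally_drawable (\<gamma> ` {0..L} \<union> inside (\<gamma> ` {0..L}))
       \<and> locally_closed_disk_drawable (\<gamma> ` {0..L} \<union> inside (\<gamma> ` {0..L}))"
proof -
  obtain \<gamma>' \<gamma>'' where \<gamma>': "\<And>t. (\<gamma> has_vector_derivative \<gamma>' t) (at t)"
    and \<gamma>'': "\<And>t. (\<gamma>' has_vector_derivative \<gamma>'' t) (at t)"
    and "continuous_on UNIV \<gamma>''"
    using smooth_curve_second_derivative[OF assms(2)] by blast
  have unit: "norm (\<gamma>' t) = 1" for t
    using assms(5)[of t] vector_derivative_at[OF \<gamma>'] by simp
  have "norm (\<gamma>'' t) < 1" for t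
    using assms(6)[OF second_deriv_eq_curvature_normal(1)[OF \<gamma>' \<gamma>'' unit]]
      second_deriv_eq_curvature_normal(2)[OF \<gamma>' \<gamma>'' unit] by simp
  moreover have "continuous_on UNIV \<gamma>"
    using \<gamma>' by (meson continuous_at_imp_continuous_on has_vector_derivative_continuous)
  ultimately interpret low_curvature_closed_curve \<gamma> L \<gamma>' \<gamma>''
    using assms(1,3,4) \<gamma>' \<gamma>'' unit \<open>continuous_on UNIV \<gamma>''\<close> by unfold_locales auto
  show ?thesis
    unfolding image_period_eq_range
    by (rule unit_disk_accessible_imp_locally_drawable[OF unit_disk_accessible_everywhere])
qed

end
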